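(* Let $(p,q,n,m)\in\mathbb{Z}_{\geq 0}^4$ and suppose that $T_{p',q',n',m'}$ is $G_\infty$-Noetherian for all $(p',q',n',m')\in\mathbb{Z}_{\ge0}^4$ such that $(p',q',n')$ is lexicographically smaller than $(p,q,n)$. Then for every $r\in\mathbb{Z}_{\geq 0}$, each of the following subsets of $T_{p,q,n,m}$ (with the subspace topology) is $G_\infty$-Noetherian: (i) $\{x=(x_{\mathrm{sym}},x_{\mathrm{alt}},x_{\mathrm{col}},x_{\mathrm{fin}})\in T_{p,q,n,m}:\ \mathrm{rk}(x_{\mathrm{sym}})\leq r\}$; (ii) $\{x\in T_{p,q,n,m}:\ \mathrm{rk}(x_{\mathrm{alt}})\leq r\}$; (iii) $\{x\in T_{p,q,n,m}:\ \mathrm{rk}(x_{\mathrm{col}})<n\}$.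
   Context: $\mathbb{C}^\infty$ is the space of all complex sequences indexed by $\mathbb{N}$ (column vectors), $\mathbb{C}^\infty_{\mathrm{fin}}$ its subspace of finitely supported sequences; $\mathrm{Sym}_\infty$, $\mathrm{Alt}_\infty$ are the spaces of symmetric, respectively skew-symmetric, complex $\mathbb{N}\times\mathbb{N}$ matrices, viewed as linear maps $\mathbb{C}^\infty_{\mathrm{fin}}\to\mathbb{C}^\infty$. $T_{p,q,n,m}=\mathrm{Sym}_\infty^{p}\times\mathrm{Alt}_\infty^{q}\times(\mathbb{C}^\infty)^n\times\mathbb{C}^m$, and a point is written $x=(x_{\mathrm{sym}},x_{\mathrm{alt}},x_{\mathrm{col}},x_{\mathrm{fin}})$ accordingly. It carries the Zariski topology whose coordinate ring is the polynomial ring in all coordinates (each polynomial involves finitely many coordinates). $G_\infty=\bigcup_k\mathrm{GL}_k(\mathbb{C})$ (embedded via $g\mapsto\mathrm{diag}(g,\mathrm{Id})$) acts by $g\cdot M=gMg^T$ on matrices, by left multiplication on vectors in $\mathbb{C}^\infty$, and trivially on $\mathbb{C}^m$. A space with a $G$-action is $G$-Noetherian if every strictly descending chain of $G$-stable closed subsets has finite length. Rank of a tuple: for vector spaces $V,W$ and $M=(M_1,\dots,M_s)\in\mathrm{Hom}(V,W)^s$, $\mathrm{rk}(M)$ is the infimum of $\mathrm{rk}(\sum_i\lambda_iM_i)\in\mathbb{Z}_{\ge0}\cup\{\infty\}$ over all nonzero $(\lambda_1,\dots,\lambda_s)\in\mathbb{C}^s$ (so $\mathrm{rk}(M)=\infty$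 if $s=0$). For $x_{\mathrm{col}}=(v_1,\dots,v_n)\in(\mathbb{C}^\infty)^n$, $\mathrm{rk}(x_{\mathrm{col}})$ denotes the dimension of the span of $v_1,\dots,v_n$. *)

theory Defs
  imports Complex_Main
begin

text \<open>A point consists of a family of N x N matrices (symmetric part, indexed by k),
a family of N x N matrices (skew part), a family of column vectors in C^infinity
(indexed by k; entry i of vector k is pcol x k i) and a finite vector.\<close>

record pt =
  psym :: "nat \<Rightarrow> nat \<Rightarrow> nat \<Rightarrow> complex"
  palt :: "nat \<Rightarrow> nat \<Rightarrow> nat \<Rightarrow> complex"
  pcol :: "nat \<Rightarrow> nat \<Rightarrow> complex"
  pfin :: "nat \<Rightarrow> complex"

definition T :: "nat \<Rightarrow> nat \<Rightarrow> nat \<Rightarrow> nat \<Rightarrow> pt set" where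
  "T p q n m = {x.
      (\<forall>k i j. psym x k i j = psym x k j i) \<and> (\<forall>k i j. p \<le> k \<longrightarrow> psym x k i j = 0) \<and>
      (\<forall>k i j. palt x k i j = - palt x k j i) \<and> (\<forall>k i j. q \<le> k \<longrightarrow> palt x k i j = 0) \<and>
      (\<forall>k i. n \<le> k \<longrightarrow> pcol x k i = 0) \<and>
      (\<forall>k. m \<le> k \<longrightarrow> pfin x k = 0)}"

datatype coord = CSym nat nat nat | CAlt nat nat nat | CCol nat nat | CFin nat

fun coord_val :: "coord \<Rightarrow> pt \<Rightarrow> complex" where
  "coord_val (CSym k i j) x = psym x k i j"
| "coord_val (CAlt k i j) x = palt x k i j"
| "coord_val (CCol k i) x = pcol x k i"
| "coord_val (CFin k) x = pfin x k"

inductive_set polyfun :: "(pt \<Rightarrow> complex) set" where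
  pconst: "(\<lambda>_. c) \<in> polyfun"
| pcoord: "coord_val v \<in> polyfun"
| padd: "f \<in> polyfun \<Longrightarrow> g \<in> polyfun \<Longrightarrow> (\<lambda>x. f x + g x) \<in> polyfun"
| pmult: "f \<in> polyfun \<Longrightarrow> g \<in> polyfun \<Longrightarrow> (\<lambda>x. f x * g x) \<in> polyfun"

definition zariski_closed_in :: "pt set \<Rightarrow> pt set \<Rightarrow> bool" where
  "zariski_closed_in X Y \<longleftrightarrow> (\<exists>F. F \<subseteq> polyfun \<and> Y = {x \<in> X. \<forall>f\<in>F. f x = 0})"

definition Ginf :: "(nat \<Rightarrow> nat \<Rightarrow> complex) \<Rightarrow> bool" where
  "Ginf g \<longleftrightarrow> (\<exists>k h.
     (\<forall>i j. (k \<le> i \<or> k \<le> j) \<longrightarrow> g i j = (if i = j then 1 else 0)) \<and>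
     (\<forall>i j. (k \<le> i \<or> k \<le> j) \<longrightarrow> h i j = (if i = j then 1 else 0)) \<and>
     (\<forall>i<k. \<forall>j<k. (\<Sum>l<k. g i l * h l j) = (if i = j then 1 else 0)) \<and>
     (\<forall>i<k. \<forall>j<k. (\<Sum>l<k. h i l * g l j) = (if i = j then 1 else 0)))"

definition gvec :: "(nat \<Rightarrow> nat \<Rightarrow> complex) \<Rightarrow> (nat \<Rightarrow> complex) \<Rightarrow> (nat \<Rightarrow> complex)" where
  "gvec g v = (\<lambda>i. \<Sum>a\<in>{a. g i a \<noteq> 0}. g i a * v a)"

definition gmat :: "(nat \<Rightarrow> nat \<Rightarrow> complex) \<Rightarrow> (nat \<Rightarrow> nat \<Rightarrow> complex) \<Rightarrow> (nat \<Rightarrow> nat \<Rightarrow> complex)" where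
  "gmat g M = (\<lambda>i j. \<Sum>a\<in>{a. g i a \<noteq> 0}. \<Sum>b\<in>{b. g j b \<noteq> 0}. g i a * M a b * g j b)"

definition act :: "(nat \<Rightarrow> nat \<Rightarrow> complex) \<Rightarrow> pt \<Rightarrow> pt" where
  "act g x = \<lparr>psym = (\<lambda>k. gmat g (psym x k)), palt = (\<lambda>k. gmat g (palt x k)),
              pcol = (\<lambda>k. gvec g (pcol x k)), pfin = pfin x\<rparr>"

definition G_stable :: "pt set \<Rightarrow> bool" where
  "G_stable Y \<longleftrightarrow> (\<forall>g. Ginf g \<longrightarrow> act g ` Y \<subseteq> Y)"

definition G_noetherian :: "pt set \<Rightarrow> bool" where
  "G_noetherian X \<longleftrightarrow> \<not> (\<exists>C :: nat \<Rightarrow> pt set.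
      \<forall>i. zariski_closed_in X (C i) \<and> G_stable (C i) \<and> C (Suc i) \<subset> C i)"

definition span_dim_le :: "(nat \<Rightarrow> nat \<Rightarrow> complex) \<Rightarrow> nat set \<Rightarrow> nat \<Rightarrow> bool" where
  "span_dim_le vs I r \<longleftrightarrow> (\<exists>u :: nat \<Rightarrow> nat \<Rightarrow> complex.
      \<forall>j\<in>I. \<exists>c :: nat \<Rightarrow> complex. vs j = (\<lambda>i. \<Sum>l<r. c l * u l i))"

definition mat_rank_le :: "(nat \<Rightarrow> nat \<Rightarrow> complex) \<Rightarrow> nat \<Rightarrow> bool" where
  "mat_rank_le M r \<longleftrightarrow> span_dim_le (\<lambda>j i. M i j) UNIV r"

text \<open>rk(M_0,...,M_{s-1}) \<le> r, the rank of a tuple being the infimum over nonzero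
linear combinations (infinite when s = 0).\<close>
definition tuple_rank_le :: "nat \<Rightarrow> (nat \<Rightarrow> nat \<Rightarrow> nat \<Rightarrow> complex) \<Rightarrow> nat \<Rightarrow> bool" where
  "tuple_rank_le s M r \<longleftrightarrow> (\<exists>lam :: nat \<Rightarrow> complex. (\<exists>k<s. lam k \<noteq> 0) \<and>
      mat_rank_le (\<lambda>i j. \<Sum>k<s. lam k * M k i j) r)"

definition col_rank_lt :: "nat \<Rightarrow> (nat \<Rightarrow> nat \<Rightarrow> complex) \<Rightarrow> bool" where
  "col_rank_lt n vs \<longleftrightarrow> (\<exists>r<n. span_dim_le vs {..<n} r)"

end

theory Submission
  imports Defs
begin

text \<open>Each of the three loci is a finite union of images, under \<open>G\<^sub>\<infinity>\<close>-equivariant polynomial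
maps, of \<open>G\<^sub>\<infinity>\<close>-stable closed subsets of spaces \<open>T p' q' n' m'\<close> with \<open>(p', q', n')\<close>
lexicographically smaller, and \<open>G\<^sub>\<infinity>\<close>-Noetherianity passes to closed subsets, to such images
and to finite unions.

If \<open>rk (Y\<^sub>0, \<dots>, Y\<^sub>c\<^sub>-\<^sub>1) \<le> r\<close>, some combination \<open>\<Sum>k. \<mu>\<^sub>k Y\<^sub>k\<close> with \<open>\<mu>\<^sub>j = 1\<close> equals
\<open>\<Sum>l<r. u\<^sub>l v\<^sub>l\<^sup>T\<close>. Recording \<open>u\<^sub>l, v\<^sub>l\<close> as \<open>2 r\<close> new columns and the \<open>\<mu>\<^sub>k\<close> as \<open>c\<close> new finite
coordinates, \<open>Y\<^sub>j\<close> is recovered from the other \<open>c - 1\<close> matrices, so the number of matrices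
of that kind drops by one; the only constraint left, (skew-)symmetry of \<open>\<Sum>l. u\<^sub>l v\<^sub>l\<^sup>T\<close>, is
closed. Likewise \<open>n\<close> vectors of rank \<open>< n\<close> are combinations of \<open>n - 1\<close> vectors, whose
\<open>n\<^sup>2\<close> coefficients become finite coordinates.\<close>

lemma G_noetherian_iff_stabilizes:
  "G_noetherian X \<longleftrightarrow> (\<forall>C. (\<forall>i. zariski_closed_in X (C i) \<and> G_stable (C i) \<and> C (Suc i) \<subseteq> C i)
      \<longrightarrow> (\<exists>N. \<forall>k\<ge>N. C k = C N))"
proof
  assume noeth: "G_noetherian X"
  show "\<forall>C. (\<forall>i. zariski_closed_in X (C i) \<and> G_stable (C i) \<and> C (Suc i) \<subseteq> C i)
      \<longrightarrow> (\<exists>N. \<forall>k\<ge>N. C k = C N)"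
  proof (intro allI impI, rule ccontr)
    fix C assume C: "\<forall>i. zariski_closed_in X (C i) \<and> G_stable (C i) \<and> C (Suc i) \<subseteq> C i"
      and not_stable: "\<not> (\<exists>N. \<forall>k\<ge>N. C k = C N)"
    have anti: "C k \<subseteq> C j" if "j \<le> k" for j k
      by (rule lift_Suc_antimono_le[of C, OF _ that]) (use C in blast)
    have "\<exists>k>N. C k \<subset> C N" for N
    proof -
      obtain k where "N \<le> k" "C k \<noteq> C N" using not_stable by blast
      then show ?thesis using anti[of N k] le_neq_implies_less by blast
    qed
    then obtain f where f: "\<And>N. C (f N) \<subset> C N" by metis
    define s where "s i = (f ^^ i) 0" for i
    have "\<forall>i. zariski_closed_in X (C (s i)) \<and> G_stable (C (s i)) \<and> C (s (Suc i)) \<subset> C (s i)"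
      using C f by (simp add: s_def)
    with noeth show False unfolding G_noetherian_def by (blast intro: exI[of _ "\<lambda>i. C (s i)"])
  qed
next
  assume stab: "\<forall>C. (\<forall>i. zariski_closed_in X (C i) \<and> G_stable (C i) \<and> C (Suc i) \<subseteq> C i)
      \<longrightarrow> (\<exists>N. \<forall>k\<ge>N. C k = C N)"
  show "G_noetherian X"
    unfolding G_noetherian_def
  proof
    assume "\<exists>C. \<forall>i. zariski_closed_in X (C i) \<and> G_stable (C i) \<and> C (Suc i) \<subset> C i"
    then obtain C where C: "\<forall>i. zariski_closed_in X (C i) \<and> G_stable (C i) \<and> C (Suc i) \<subset> C i"
      by blast
    then have "\<exists>N. \<forall>k\<ge>N. C k = C N" using stab[rule_format, of C] by blast
    then obtain N where "C (Suc N) = C N" by (meson le_SucI order_refl)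
    with C show False by auto
  qed
qed

lemma G_noetherian_empty: "G_noetherian {}"
  unfolding G_noetherian_def zariski_closed_in_def by blast

lemma zariski_closed_in_subset: "zariski_closed_in X C \<Longrightarrow> C \<subseteq> X"
  unfolding zariski_closed_in_def by blast

lemma zariski_closed_in_Int:
  "zariski_closed_in Y C \<Longrightarrow> A \<subseteq> Y \<Longrightarrow> zariski_closed_in A (C \<inter> A)"
  unfolding zariski_closed_in_def by blast

lemma zariski_closed_in_trans:
  assumes "zariski_closed_in X Z" "zariski_closed_in Z C"
  shows "zariski_closed_in X C"
proof -
  obtain F F' where "F \<subseteq> polyfun" "Z = {x \<in> X. \<forall>f\<in>F. f x = 0}"
    "F' \<subseteq> polyfun" "C = {x \<in> Z. \<forall>f\<in>F'. f x = 0}"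
    using assms unfolding zariski_closed_in_def by blast
  then show ?thesis
    unfolding zariski_closed_in_def by (intro exI[of _ "F \<union> F'"]) blast
qed

lemma G_stable_Int: "G_stable A \<Longrightarrow> G_stable B \<Longrightarrow> G_stable (A \<inter> B)"
  unfolding G_stable_def by blast

lemma G_stable_Un: "G_stable A \<Longrightarrow> G_stable B \<Longrightarrow> G_stable (A \<union> B)"
  unfolding G_stable_def by blast

lemma G_noetherian_Un:
  assumes "G_noetherian A" "G_noetherian B" "G_stable A" "G_stable B"
  shows "G_noetherian (A \<union> B)"
  unfolding G_noetherian_iff_stabilizes
proof (intro allI impI)
  fix C assume C: "\<forall>i. zariski_closed_in (A \<union> B) (C i) \<and> G_stable (C i) \<and> C (Suc i) \<subseteq> C i"
  have "\<exists>N. \<forall>k\<ge>N. C k \<inter> Y = C N \<inter> Y"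
    if "Y \<subseteq> A \<union> B" "G_noetherian Y" "G_stable Y" for Y
  proof -
    have "\<forall>i. zariski_closed_in Y (C i \<inter> Y) \<and> G_stable (C i \<inter> Y) \<and> C (Suc i) \<inter> Y \<subseteq> C i \<inter> Y"
      using C zariski_closed_in_Int[OF _ that(1)] G_stable_Int[OF _ that(3)] by blast
    then show ?thesis
      using that(2) unfolding G_noetherian_iff_stabilizes by (elim allE[where x="\<lambda>i. C i \<inter> Y"]) blast
  qed
  then obtain NA NB where NA: "\<forall>k\<ge>NA. C k \<inter> A = C NA \<inter> A" and NB: "\<forall>k\<ge>NB. C k \<inter> B = C NB \<inter> B"
    using assms by (metis sup_ge1 sup_ge2)
  have sub: "C k \<subseteq> A \<union> B" for k using C zariski_closed_in_subset by blast
  show "\<exists>N. \<forall>k\<ge>N. C k = C N"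
  proof (intro exI allI impI)
    fix k assume "max NA NB \<le> k"
    then have "C k \<inter> A = C (max NA NB) \<inter> A" "C k \<inter> B = C (max NA NB) \<inter> B"
      using NA NB by (metis max.bounded_iff max.cobounded1 max.cobounded2)+
    then show "C k = C (max NA NB)" using sub[of k] sub[of "max NA NB"] by blast
  qed
qed

lemma G_noetherian_UN_lessThan:
  fixes c :: nat
  assumes "\<And>j. j < c \<Longrightarrow> G_noetherian (Y j) \<and> G_stable (Y j)"
  shows "G_noetherian (\<Union>j<c. Y j)"
proof -
  have "G_noetherian (\<Union>j<c. Y j) \<and> G_stable (\<Union>j<c. Y j)"
    using assms
  proof (induction c)
    case 0
    then show ?case using G_noetherian_empty by (simp add: G_stable_def)
  next
    case (Suc c)
    then show ?case
      using G_noetherian_Un[of "\<Union>j<c. Y j" "Y c"] G_stable_Un[of "\<Union>j<c. Y j" "Y c"]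
      by (simp add: lessThan_Suc Un_commute)
  qed
  then show ?thesis ..
qed

lemma G_noetherian_closed_subset:
  assumes "G_noetherian X" "zariski_closed_in X Z"
  shows "G_noetherian Z"
  using assms zariski_closed_in_trans unfolding G_noetherian_def by blast

lemma polyfun_coordinates:
  "(\<lambda>x. psym x k i j) \<in> polyfun" "(\<lambda>x. palt x k i j) \<in> polyfun"
  "(\<lambda>x. pcol x k i) \<in> polyfun" "(\<lambda>x. pfin x k) \<in> polyfun"
proof -
  have "coord_val (CSym k i j) = (\<lambda>x. psym x k i j)" "coord_val (CAlt k i j) = (\<lambda>x. palt x k i j)"
    "coord_val (CCol k i) = (\<lambda>x. pcol x k i)" "coord_val (CFin k) = (\<lambda>x. pfin x k)"
    by (simp_all add: fun_eq_iff)
  then show "(\<lambda>x. psym x k i j) \<in> polyfun" "(\<lambda>x. palt x k i j) \<in> polyfun"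
    "(\<lambda>x. pcol x k i) \<in> polyfun" "(\<lambda>x. pfin x k) \<in> polyfun"
    using polyfun.pcoord by metis+
qed

lemma polyfun_diff: "f \<in> polyfun \<Longrightarrow> g \<in> polyfun \<Longrightarrow> (\<lambda>x. f x - g x) \<in> polyfun"
  using polyfun.padd[OF _ polyfun.pmult[OF polyfun.pconst[of "-1"]], of f g] by simp

lemma polyfun_sum:
  assumes "\<And>k. k \<in> K \<Longrightarrow> f k \<in> polyfun"
  shows "(\<lambda>x. \<Sum>k\<in>K. f k x) \<in> polyfun"
proof (cases "finite K")
  case True
  then show ?thesis using assms
    by (induction K rule: finite_induct) (simp_all add: polyfun.pconst polyfun.padd)
qed (simp add: polyfun.pconst)

lemmas polyfun_intros = polyfun.pconst polyfun.padd polyfun.pmult polyfun_diff polyfun_sum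
  polyfun_coordinates

definition polymap :: "(pt \<Rightarrow> pt) \<Rightarrow> bool" where
  "polymap \<phi> \<longleftrightarrow> (\<forall>v. (\<lambda>x. coord_val v (\<phi> x)) \<in> polyfun)"

lemma polymapI:
  assumes "\<And>k i j. (\<lambda>x. psym (\<phi> x) k i j) \<in> polyfun" "\<And>k i j. (\<lambda>x. palt (\<phi> x) k i j) \<in> polyfun"
    "\<And>k i. (\<lambda>x. pcol (\<phi> x) k i) \<in> polyfun" "\<And>k. (\<lambda>x. pfin (\<phi> x) k) \<in> polyfun"
  shows "polymap \<phi>"
  unfolding polymap_def
proof
  fix v show "(\<lambda>x. coord_val v (\<phi> x)) \<in> polyfun" using assms by (cases v) auto
qed

lemma polyfun_comp_polymap:
  assumes "f \<in> polyfun" "polymap \<phi>"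
  shows "(\<lambda>x. f (\<phi> x)) \<in> polyfun"
  using assms(1)
proof (induction rule: polyfun.induct)
  case (pcoord v)
  then show ?case using assms(2) unfolding polymap_def by blast
qed (simp_all add: polyfun.pconst polyfun.padd polyfun.pmult)

lemma zariski_closed_in_vimage:
  assumes "zariski_closed_in (\<phi> ` X) C" "polymap \<phi>"
  shows "zariski_closed_in X {x \<in> X. \<phi> x \<in> C}"
proof -
  obtain F where F: "F \<subseteq> polyfun" "C = {y \<in> \<phi> ` X. \<forall>f\<in>F. f y = 0}"
    using assms(1) unfolding zariski_closed_in_def by blast
  have "{x \<in> X. \<phi> x \<in> C} = {x \<in> X. \<forall>f\<in>(\<lambda>f x. f (\<phi> x)) ` F. f x = 0}"
    using F(2) by auto
  moreover have "(\<lambda>f x. f (\<phi> x)) ` F \<subseteq> polyfun"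
    using F(1) polyfun_comp_polymap[OF _ assms(2)] by blast
  ultimately show ?thesis unfolding zariski_closed_in_def by blast
qed

definition G_equivariant_on :: "pt set \<Rightarrow> (pt \<Rightarrow> pt) \<Rightarrow> bool" where
  "G_equivariant_on X \<phi> \<longleftrightarrow> (\<forall>g x. Ginf g \<longrightarrow> x \<in> X \<longrightarrow> act g x \<in> X \<and> \<phi> (act g x) = act g (\<phi> x))"

lemma G_stable_image:
  assumes "G_equivariant_on X \<phi>"
  shows "G_stable (\<phi> ` X)"
  unfolding G_stable_def
proof (intro allI impI subsetI)
  fix g y assume "Ginf g" "y \<in> act g ` \<phi> ` X"
  then obtain x where "x \<in> X" "y = act g (\<phi> x)" by blast
  with assms \<open>Ginf g\<close> show "y \<in> \<phi> ` X" unfolding G_equivariant_on_def by (metis image_eqI)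
qed

lemma G_stable_vimage:
  "G_equivariant_on X \<phi> \<Longrightarrow> G_stable C \<Longrightarrow> G_stable {x \<in> X. \<phi> x \<in> C}"
  unfolding G_equivariant_on_def G_stable_def by blast

lemma G_noetherian_image:
  assumes X: "G_noetherian X" and eqv: "G_equivariant_on X \<phi>" and poly: "polymap \<phi>"
  shows "G_noetherian (\<phi> ` X)"
  unfolding G_noetherian_iff_stabilizes
proof (intro allI impI)
  fix C assume C: "\<forall>i. zariski_closed_in (\<phi> ` X) (C i) \<and> G_stable (C i) \<and> C (Suc i) \<subseteq> C i"
  define D where "D i = {x \<in> X. \<phi> x \<in> C i}" for i
  have "\<forall>i. zariski_closed_in X (D i) \<and> G_stable (D i) \<and> D (Suc i) \<subseteq> D i"
    using C zariski_closed_in_vimage[OF _ poly] G_stable_vimage[OF eqv] unfolding D_def by blast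
  then obtain N where N: "\<forall>k\<ge>N. D k = D N"
    using X unfolding G_noetherian_iff_stabilizes by blast
  have "C k = \<phi> ` D k" for k
    using C zariski_closed_in_subset unfolding D_def by blast
  then show "\<exists>N. \<forall>k\<ge>N. C k = C N" using N by metis
qed

lemma gvec_sum: "gvec g (\<lambda>a. \<Sum>l\<in>L. c l * v l a) i = (\<Sum>l\<in>L. c l * gvec g (v l) i)"
  unfolding gvec_def by (simp add: sum_distrib_left sum.swap[of _ L] mult.left_commute)

lemma gvec_zero: "gvec g (\<lambda>a. 0) = (\<lambda>i. 0)"
  unfolding gvec_def by simp

lemma gmat_zero: "gmat g (\<lambda>a b. 0) = (\<lambda>i j. 0)"
  unfolding gmat_def by simp

lemma gmat_sign_sym:
  assumes "\<And>a b. M a b = e * M b a"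
  shows "gmat g M i j = e * gmat g M j i"
proof -
  have "gmat g M i j = (\<Sum>a | g i a \<noteq> 0. \<Sum>b | g j b \<noteq> 0. g i a * (e * M b a) * g j b)"
    unfolding gmat_def by (subst assms) (rule refl)
  also have "\<dots> = e * gmat g M j i"
    unfolding gmat_def by (subst sum.swap) (simp add: sum_distrib_left mult_ac)
  finally show ?thesis .
qed

lemma gmat_sum_outer:
  "gmat g (\<lambda>a b. \<Sum>l\<in>L. U l a * W l b) i j = (\<Sum>l\<in>L. gvec g (U l) i * gvec g (W l) j)"
proof -
  let ?A = "{a. g i a \<noteq> 0}" and ?B = "{b. g j b \<noteq> 0}"
  have "gmat g (\<lambda>a b. \<Sum>l\<in>L. U l a * W l b) i j
      = (\<Sum>a\<in>?A. \<Sum>b\<in>?B. \<Sum>l\<in>L. (g i a * U l a) * (g j b * W l b))"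
    unfolding gmat_def by (simp add: sum_distrib_left sum_distrib_right mult_ac)
  also have "\<dots> = (\<Sum>a\<in>?A. \<Sum>l\<in>L. \<Sum>b\<in>?B. (g i a * U l a) * (g j b * W l b))"
    by (simp add: sum.swap[of _ ?B])
  also have "\<dots> = (\<Sum>l\<in>L. \<Sum>a\<in>?A. \<Sum>b\<in>?B. (g i a * U l a) * (g j b * W l b))"
    by (rule sum.swap)
  also have "\<dots> = (\<Sum>l\<in>L. gvec g (U l) i * gvec g (W l) j)"
    unfolding gvec_def by (simp add: sum_product)
  finally show ?thesis .
qed

lemma gmat_diff_sum:
  "gmat g (\<lambda>a b. N a b - (\<Sum>k\<in>K. c k * M k a b)) i j = gmat g N i j - (\<Sum>k\<in>K. c k * gmat g (M k) i j)"
proof -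
  let ?A = "{a. g i a \<noteq> 0}" and ?B = "{b. g j b \<noteq> 0}"
  have "gmat g (\<lambda>a b. N a b - (\<Sum>k\<in>K. c k * M k a b)) i j
     = gmat g N i j - (\<Sum>a\<in>?A. \<Sum>b\<in>?B. \<Sum>k\<in>K. c k * (g i a * M k a b * g j b))"
    unfolding gmat_def
    by (simp add: left_diff_distrib right_diff_distrib sum_subtractf sum_distrib_left sum_distrib_right mult_ac)
  also have "(\<Sum>a\<in>?A. \<Sum>b\<in>?B. \<Sum>k\<in>K. c k * (g i a * M k a b * g j b))
      = (\<Sum>a\<in>?A. \<Sum>k\<in>K. \<Sum>b\<in>?B. c k * (g i a * M k a b * g j b))"
    by (simp add: sum.swap[of _ ?B])
  also have "\<dots> = (\<Sum>k\<in>K. \<Sum>a\<in>?A. \<Sum>b\<in>?B. c k * (g i a * M k a b * g j b))"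
    by (rule sum.swap)
  also have "\<dots> = (\<Sum>k\<in>K. c k * gmat g (M k) i j)"
    unfolding gmat_def by (simp add: sum_distrib_left)
  finally show ?thesis .
qed

definition mat_family :: "complex \<Rightarrow> nat \<Rightarrow> (nat \<Rightarrow> nat \<Rightarrow> nat \<Rightarrow> complex) \<Rightarrow> bool" where
  "mat_family e c M \<longleftrightarrow> (\<forall>k a b. M k a b = e * M k b a) \<and> (\<forall>k a b. c \<le> k \<longrightarrow> M k a b = 0)"

lemma mat_familyI:
  "(\<And>k a b. M k a b = e * M k b a) \<Longrightarrow> (\<And>k a b. c \<le> k \<Longrightarrow> M k a b = 0) \<Longrightarrow> mat_family e c M"
  unfolding mat_family_def by blast

lemma mat_family_sym: "mat_family e c M \<Longrightarrow> M k a b = e * M k b a"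
  unfolding mat_family_def by blast

lemma mat_family_vanish: "mat_family e c M \<Longrightarrow> c \<le> k \<Longrightarrow> M k a b = 0"
  unfolding mat_family_def by blast

lemma T_iff:
  "x \<in> T p q n m \<longleftrightarrow> mat_family 1 p (psym x) \<and> mat_family (-1) q (palt x)
     \<and> (\<forall>k i. n \<le> k \<longrightarrow> pcol x k i = 0) \<and> (\<forall>k. m \<le> k \<longrightarrow> pfin x k = 0)"
  unfolding T_def mat_family_def by auto

lemma mat_family_gmat:
  assumes "mat_family e c M"
  shows "mat_family e c (\<lambda>k. gmat g (M k))"
  unfolding mat_family_def
proof (intro conjI allI impI)
  show "gmat g (M k) a b = e * gmat g (M k) b a" for k a b
    using assms unfolding mat_family_def by (blast intro: gmat_sign_sym)
  show "gmat g (M k) a b = 0" if "c \<le> k" for k a b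
  proof -
    have "M k = (\<lambda>a b. 0)" using assms that unfolding mat_family_def by blast
    then show ?thesis by (simp add: gmat_zero)
  qed
qed

lemma act_T: "x \<in> T p q n m \<Longrightarrow> act g x \<in> T p q n m"
  unfolding T_iff act_def by (simp add: mat_family_gmat gvec_def)

definition family :: "bool \<Rightarrow> pt \<Rightarrow> nat \<Rightarrow> nat \<Rightarrow> nat \<Rightarrow> complex" where
  "family skew = (if skew then palt else psym)"

definition set_family :: "bool \<Rightarrow> (nat \<Rightarrow> nat \<Rightarrow> nat \<Rightarrow> complex) \<Rightarrow> pt \<Rightarrow> pt" where
  "set_family skew M x = (if skew then x\<lparr>palt := M\<rparr> else x\<lparr>psym := M\<rparr>)"

definition family_sign :: "bool \<Rightarrow> complex" where
  "family_sign skew = (if skew then -1 else 1)"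

definition T_kind :: "bool \<Rightarrow> nat \<Rightarrow> nat \<Rightarrow> nat \<Rightarrow> nat \<Rightarrow> pt set" where
  "T_kind skew c d n m = (if skew then T d c n m else T c d n m)"

lemma T_kind_iff:
  "x \<in> T_kind skew c d n m \<longleftrightarrow>
     mat_family (family_sign skew) c (family skew x) \<and> mat_family (family_sign (\<not> skew)) d (family (\<not> skew) x)
     \<and> (\<forall>k i. n \<le> k \<longrightarrow> pcol x k i = 0) \<and> (\<forall>k. m \<le> k \<longrightarrow> pfin x k = 0)"
  unfolding T_kind_def family_def family_sign_def by (cases skew) (auto simp: T_iff)

lemma family_set_family [simp]:
  "family skew (set_family skew M x) = M"
  "family (\<not> skew) (set_family skew M x) = family (\<not> skew) x"
  "pcol (set_family skew M x) = pcol x" "pfin (set_family skew M x) = pfin x"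
  unfolding family_def set_family_def by simp_all

lemma family_update [simp]:
  "family skew (x\<lparr>pcol := v\<rparr>) = family skew x" "family skew (x\<lparr>pfin := f\<rparr>) = family skew x"
  unfolding family_def by simp_all

lemma family_act: "family skew (act g x) = (\<lambda>k. gmat g (family skew x k))"
  unfolding family_def act_def by simp

lemma act_set_family: "act g (set_family skew M x) = set_family skew (\<lambda>k. gmat g (M k)) (act g x)"
  unfolding set_family_def act_def by simp

lemma act_T_kind: "x \<in> T_kind skew c d n m \<Longrightarrow> act g x \<in> T_kind skew c d n m"
  unfolding T_kind_def by (cases skew) (simp_all add: act_T)

lemma polyfun_family: "(\<lambda>x. family skew x k i j) \<in> polyfun"
  unfolding family_def by (simp add: polyfun_coordinates)

lemma polymap_familyI:
  assumes "\<And>k i j. (\<lambda>x. family skew (\<phi> x) k i j) \<in> polyfun"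
    "\<And>k i j. (\<lambda>x. family (\<not> skew) (\<phi> x) k i j) \<in> polyfun"
    "\<And>k i. (\<lambda>x. pcol (\<phi> x) k i) \<in> polyfun" "\<And>k. (\<lambda>x. pfin (\<phi> x) k) \<in> polyfun"
  shows "polymap \<phi>"
  using assms by (cases skew) (simp_all add: family_def polymapI)

lemma pt_eq_by_family:
  assumes "family skew x = family skew y" "family (\<not> skew) x = family (\<not> skew) y"
    "pcol x = pcol y" "pfin x = pfin y"
  shows "x = y"
  using assms by (cases skew) (simp_all add: family_def pt.equality)

definition skip_index :: "nat \<Rightarrow> nat \<Rightarrow> nat" where
  "skip_index j k = (if k < j then k else k - 1)"

definition drop_index :: "nat \<Rightarrow> (nat \<Rightarrow> 'a) \<Rightarrow> nat \<Rightarrow> 'a" where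
  "drop_index j Y k = (if k < j then Y k else Y (Suc k))"

lemma drop_index_skip_index: "k \<noteq> j \<Longrightarrow> drop_index j Y (skip_index j k) = Y k"
  unfolding drop_index_def skip_index_def by auto

lemma mat_family_drop_index:
  assumes Y: "mat_family e c Y" and "j < c"
  shows "mat_family e (c - 1) (drop_index j Y)"
proof (rule mat_familyI)
  show "drop_index j Y k a b = e * drop_index j Y k b a" for k a b
    unfolding drop_index_def using mat_family_sym[OF Y, of k a b] mat_family_sym[OF Y, of "Suc k" a b]
    by simp
  show "drop_index j Y k a b = 0" if "c - 1 \<le> k" for k a b
    using that \<open>j < c\<close> mat_family_vanish[OF Y, of "Suc k" a b] unfolding drop_index_def by auto
qed

text \<open>Inverse to \<open>drop_index j\<close>: slot \<open>j\<close> is solved for from the relation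
\<open>\<Sum>k<c. \<mu>(j := 1) k * Y k = N\<close>.\<close>

definition fill_slot :: "nat \<Rightarrow> nat \<Rightarrow> (nat \<Rightarrow> complex) \<Rightarrow> (nat \<Rightarrow> nat \<Rightarrow> complex)
    \<Rightarrow> (nat \<Rightarrow> nat \<Rightarrow> nat \<Rightarrow> complex) \<Rightarrow> nat \<Rightarrow> nat \<Rightarrow> nat \<Rightarrow> complex" where
  "fill_slot j c \<mu> N M = (\<lambda>k.
     if k = j then (\<lambda>a b. N a b - (\<Sum>k'\<in>{..<c} - {j}. \<mu> k' * M (skip_index j k') a b))
     else if k < c then M (skip_index j k) else (\<lambda>a b. 0))"

lemma sum_fill_slot:
  assumes "j < c"
  shows "(\<Sum>k<c. (\<mu>(j := 1)) k * fill_slot j c \<mu> N M k a b) = N a b"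
proof -
  have "(\<Sum>k<c. (\<mu>(j := 1)) k * fill_slot j c \<mu> N M k a b)
      = fill_slot j c \<mu> N M j a b + (\<Sum>k\<in>{..<c} - {j}. \<mu> k * fill_slot j c \<mu> N M k a b)"
    using assms by (simp add: sum.remove[of "{..<c}" j])
  also have "(\<Sum>k\<in>{..<c} - {j}. \<mu> k * fill_slot j c \<mu> N M k a b)
      = (\<Sum>k\<in>{..<c} - {j}. \<mu> k * M (skip_index j k) a b)"
    by (rule sum.cong) (auto simp: fill_slot_def)
  finally show ?thesis by (simp add: fill_slot_def)
qed

lemma fill_slot_gmat:
  "fill_slot j c \<mu> (gmat g N) (\<lambda>k. gmat g (M k)) = (\<lambda>k. gmat g (fill_slot j c \<mu> N M k))"
  unfolding fill_slot_def by (auto simp: gmat_diff_sum gmat_zero fun_eq_iff)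

lemma mat_family_fill_slot:
  assumes M: "\<And>k a b. M k a b = e * M k b a" and N: "\<And>a b. N a b = e * N b a" and "j < c"
  shows "mat_family e c (fill_slot j c \<mu> N M)"
proof (rule mat_familyI)
  fix k a b
  have "(\<Sum>k'\<in>{..<c} - {j}. \<mu> k' * M (skip_index j k') a b)
      = e * (\<Sum>k'\<in>{..<c} - {j}. \<mu> k' * M (skip_index j k') b a)"
    unfolding sum_distrib_left
    by (rule sum.cong) (simp_all add: M[of _ a b] mult_ac)
  then show "fill_slot j c \<mu> N M k a b = e * fill_slot j c \<mu> N M k b a"
    unfolding fill_slot_def using M[of "skip_index j k" a b] N[of a b]
    by (simp add: right_diff_distrib)
  show "fill_slot j c \<mu> N M k a b = 0" if "c \<le> k"
    using that \<open>j < c\<close> unfolding fill_slot_def by simp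
qed

lemma fill_slot_drop_index:
  assumes Y: "\<And>k a b. c \<le> k \<Longrightarrow> Y k a b = 0" and "j < c" "\<mu> j = 1"
    and N: "\<And>a b. N a b = (\<Sum>k<c. \<mu> k * Y k a b)"
  shows "fill_slot j c \<mu> N (drop_index j Y) = Y"
proof (intro ext)
  fix k a b
  have "N a b = Y j a b + (\<Sum>k\<in>{..<c} - {j}. \<mu> k * Y k a b)"
    using N \<open>j < c\<close> \<open>\<mu> j = 1\<close> by (simp add: sum.remove[of "{..<c}" j])
  moreover have "(\<Sum>k\<in>{..<c} - {j}. \<mu> k * drop_index j Y (skip_index j k) a b)
      = (\<Sum>k\<in>{..<c} - {j}. \<mu> k * Y k a b)"
    by (rule sum.cong) (simp_all add: drop_index_skip_index)
  ultimately show "fill_slot j c \<mu> N (drop_index j Y) k a b = Y k a b"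
    using Y drop_index_skip_index[of k j Y] unfolding fill_slot_def by auto
qed

lemma polyfun_fill_slot:
  assumes "\<And>a b. (\<lambda>x. N x a b) \<in> polyfun" "\<And>k a b. (\<lambda>x. M x k a b) \<in> polyfun"
    "\<And>k. (\<lambda>x. \<mu> x k) \<in> polyfun"
  shows "(\<lambda>x. fill_slot j c (\<mu> x) (N x) (M x) k a b) \<in> polyfun"
  using assms by (cases "k = j"; cases "k < c") (simp_all add: fill_slot_def polyfun_intros)

lemma mat_rank_le_sum_outer: "mat_rank_le (\<lambda>a b. \<Sum>l<r. u l a * v l b) r"
  unfolding mat_rank_le_def span_dim_le_def
  by (intro exI[of _ u] ballI exI[of _ "\<lambda>l. v l _"]) (simp add: mult.commute)

lemma mat_rank_le_scale:
  assumes "mat_rank_le M r"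
  shows "mat_rank_le (\<lambda>a b. c * M a b) r"
proof -
  obtain u where u: "\<forall>j. \<exists>d. (\<lambda>i. M i j) = (\<lambda>i. \<Sum>l<r. d l * u l i)"
    using assms unfolding mat_rank_le_def span_dim_le_def by blast
  have "\<exists>d. (\<lambda>i. c * M i j) = (\<lambda>i. \<Sum>l<r. d l * u l i)" for j
  proof -
    obtain d where "(\<lambda>i. M i j) = (\<lambda>i. \<Sum>l<r. d l * u l i)" using u by blast
    then show ?thesis
      by (intro exI[of _ "\<lambda>l. c * d l"]) (simp add: fun_eq_iff sum_distrib_left mult_ac)
  qed
  then show ?thesis unfolding mat_rank_le_def span_dim_le_def by blast
qed

lemma mat_rank_leE:
  assumes "mat_rank_le N r"
  obtains u v where "\<And>a b. N a b = (\<Sum>l<r. u l a * v l b)"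
proof -
  obtain u where "\<forall>j. \<exists>d. (\<lambda>i. N i j) = (\<lambda>i. \<Sum>l<r. d l * u l i)"
    using assms unfolding mat_rank_le_def span_dim_le_def by blast
  then obtain d where "\<And>j. (\<lambda>i. N i j) = (\<lambda>i. \<Sum>l<r. d j l * u l i)" by metis
  then show ?thesis
    by (intro that[of u "\<lambda>l b. d b l"]) (simp add: fun_eq_iff mult.commute)
qed

definition outer_sum :: "nat \<Rightarrow> nat \<Rightarrow> pt \<Rightarrow> nat \<Rightarrow> nat \<Rightarrow> complex" where
  "outer_sum n r x = (\<lambda>a b. \<Sum>l<r. pcol x (n + l) a * pcol x (n + r + l) b)"

lemma outer_sum_act: "outer_sum n r (act g x) = gmat g (outer_sum n r x)"
  unfolding outer_sum_def by (simp add: act_def gmat_sum_outer fun_eq_iff)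

lemma polyfun_outer_sum: "(\<lambda>x. outer_sum n r x a b) \<in> polyfun"
  unfolding outer_sum_def by (simp add: polyfun_intros)

lemma mat_rank_le_outer_sum: "mat_rank_le (outer_sum n r x) r"
  unfolding outer_sum_def by (rule mat_rank_le_sum_outer)

definition truncate_pt :: "nat \<Rightarrow> nat \<Rightarrow> pt \<Rightarrow> pt" where
  "truncate_pt n m x = x\<lparr>pcol := (\<lambda>k. if k < n then pcol x k else (\<lambda>i. 0)),
     pfin := (\<lambda>k. if k < m then pfin x k else 0)\<rparr>"

lemma family_truncate_pt [simp]: "family skew (truncate_pt n m x) = family skew x"
  unfolding truncate_pt_def by simp

lemma act_truncate_pt: "act g (truncate_pt n m x) = truncate_pt n m (act g x)"
  unfolding act_def truncate_pt_def by (simp add: gvec_zero fun_eq_iff)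

definition rank_param :: "bool \<Rightarrow> nat \<Rightarrow> nat \<Rightarrow> nat \<Rightarrow> nat \<Rightarrow> nat \<Rightarrow> pt \<Rightarrow> pt" where
  "rank_param skew c j n m r x = set_family skew
     (fill_slot j c (\<lambda>k. pfin x (m + k)) (outer_sum n r x) (family skew x)) (truncate_pt n m x)"

definition rank_param_domain :: "bool \<Rightarrow> nat \<Rightarrow> nat \<Rightarrow> nat \<Rightarrow> nat \<Rightarrow> nat \<Rightarrow> pt set" where
  "rank_param_domain skew c d n m r = {x \<in> T_kind skew (c - 1) d (n + 2 * r) (m + c).
     \<forall>a b. outer_sum n r x a b = family_sign skew * outer_sum n r x b a}"

lemma rank_param_domain_closed:
  "zariski_closed_in (T_kind skew (c - 1) d (n + 2 * r) (m + c)) (rank_param_domain skew c d n m r)"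
  unfolding zariski_closed_in_def
proof (intro exI conjI)
  let ?F = "(\<lambda>(a, b) x. outer_sum n r x a b - family_sign skew * outer_sum n r x b a) ` UNIV"
  show "?F \<subseteq> polyfun" by (auto simp: polyfun_intros polyfun_outer_sum)
  show "rank_param_domain skew c d n m r = {x \<in> T_kind skew (c - 1) d (n + 2 * r) (m + c). \<forall>f\<in>?F. f x = 0}"
    unfolding rank_param_domain_def by auto
qed

lemma G_equivariant_rank_param:
  "G_equivariant_on (rank_param_domain skew c d n m r) (rank_param skew c j n m r)"
  unfolding G_equivariant_on_def
proof (intro allI impI conjI)
  fix g x assume x: "x \<in> rank_param_domain skew c d n m r"
  then have "outer_sum n r (act g x) a b = family_sign skew * outer_sum n r (act g x) b a" for a b
    unfolding rank_param_domain_def outer_sum_act by (blast intro: gmat_sign_sym)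
  with x show "act g x \<in> rank_param_domain skew c d n m r"
    unfolding rank_param_domain_def using act_T_kind by blast
  have "pfin (act g x) = pfin x" by (simp add: act_def)
  then show "rank_param skew c j n m r (act g x) = act g (rank_param skew c j n m r x)"
    unfolding rank_param_def act_set_family act_truncate_pt
    by (simp add: family_act outer_sum_act fill_slot_gmat)
qed

lemma polymap_rank_param: "polymap (rank_param skew c j n m r)"
proof (rule polymap_familyI[where skew = skew])
  show "(\<lambda>x. family skew (rank_param skew c j n m r x) k a b) \<in> polyfun" for k a b
    unfolding rank_param_def family_set_family
    by (rule polyfun_fill_slot) (simp_all add: polyfun_outer_sum polyfun_family polyfun_coordinates)
  show "(\<lambda>x. family (\<not> skew) (rank_param skew c j n m r x) k a b) \<in> polyfun" for k a b
    unfolding rank_param_def by (simp add: polyfun_family)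
  show "(\<lambda>x. pcol (rank_param skew c j n m r x) k i) \<in> polyfun" for k i
    unfolding rank_param_def truncate_pt_def by (cases "k < n") (simp_all add: polyfun_intros)
  show "(\<lambda>x. pfin (rank_param skew c j n m r x) k) \<in> polyfun" for k
    unfolding rank_param_def truncate_pt_def by (cases "k < m") (simp_all add: polyfun_intros)
qed

lemma rank_param_mem_rank_locus:
  assumes j: "j < c" and x: "x \<in> rank_param_domain skew c d n m r"
  shows "rank_param skew c j n m r x \<in> {y \<in> T_kind skew c d n m. tuple_rank_le c (family skew y) r}"
proof -
  let ?y = "rank_param skew c j n m r x" and ?\<mu> = "(\<lambda>k. pfin x (m + k))(j := 1)"
  have xT: "x \<in> T_kind skew (c - 1) d (n + 2 * r) (m + c)"
    and N: "\<And>a b. outer_sum n r x a b = family_sign skew * outer_sum n r x b a"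
    using x unfolding rank_param_domain_def by blast+
  have fam: "mat_family (family_sign skew) (c - 1) (family skew x)"
    and other: "mat_family (family_sign (\<not> skew)) d (family (\<not> skew) x)"
    using xT unfolding T_kind_iff by blast+
  have "mat_family (family_sign skew) c (family skew ?y)"
    unfolding rank_param_def family_set_family by (rule mat_family_fill_slot[OF mat_family_sym[OF fam] N j])
  with other have "?y \<in> T_kind skew c d n m"
    unfolding T_kind_iff rank_param_def by (simp add: truncate_pt_def)
  moreover have "(\<lambda>a b. \<Sum>k<c. ?\<mu> k * family skew ?y k a b) = outer_sum n r x"
    unfolding rank_param_def family_set_family using sum_fill_slot[OF j] by (simp add: fun_eq_iff)
  then have "tuple_rank_le c (family skew ?y) r"
    unfolding tuple_rank_le_def using j mat_rank_le_outer_sum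
    by (intro exI[of _ ?\<mu>]) auto
  ultimately show ?thesis by blast
qed

lemma tuple_rank_leE:
  assumes "tuple_rank_le c Y r"
  obtains j \<mu> u v where "j < c" "\<mu> j = 1"
    "\<And>a b. (\<Sum>k<c. \<mu> k * Y k a b) = (\<Sum>l<r. u l a * v l b)"
proof -
  obtain lam j where j: "j < c" "lam j \<noteq> 0"
    and rk: "mat_rank_le (\<lambda>a b. \<Sum>k<c. lam k * Y k a b) r"
    using assms unfolding tuple_rank_le_def by blast
  define \<mu> where "\<mu> k = lam k / lam j" for k
  have "(\<lambda>a b. \<Sum>k<c. \<mu> k * Y k a b) = (\<lambda>a b. (1 / lam j) * (\<Sum>k<c. lam k * Y k a b))"
    unfolding \<mu>_def by (simp add: sum_distrib_left fun_eq_iff)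
  then have "mat_rank_le (\<lambda>a b. \<Sum>k<c. \<mu> k * Y k a b) r"
    using mat_rank_le_scale[OF rk, of "1 / lam j"] by (simp only:)
  then obtain u v where "\<And>a b. (\<Sum>k<c. \<mu> k * Y k a b) = (\<Sum>l<r. u l a * v l b)"
    by (rule mat_rank_leE) blast
  moreover have "\<mu> j = 1" using j unfolding \<mu>_def by simp
  ultimately show ?thesis using that j by blast
qed

lemma rank_locus_subset_UN_rank_param:
  "{y \<in> T_kind skew c d n m. tuple_rank_le c (family skew y) r}
     \<subseteq> (\<Union>j<c. rank_param skew c j n m r ` rank_param_domain skew c d n m r)"
proof
  fix y assume "y \<in> {y \<in> T_kind skew c d n m. tuple_rank_le c (family skew y) r}"
  then have yT: "y \<in> T_kind skew c d n m" and rk: "tuple_rank_le c (family skew y) r" by auto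
  from rk obtain j \<mu> u v where j: "j < c" "\<mu> j = 1"
    and uv: "\<And>a b. (\<Sum>k<c. \<mu> k * family skew y k a b) = (\<Sum>l<r. u l a * v l b)"
    by (rule tuple_rank_leE) blast
  let ?Y = "family skew y" and ?e = "family_sign skew"
  have Y: "mat_family ?e c ?Y" and cols: "\<And>k i. n \<le> k \<Longrightarrow> pcol y k i = 0"
    and fin: "\<And>k. m \<le> k \<Longrightarrow> pfin y k = 0"
    using yT unfolding T_kind_iff by blast+
  define N where "N a b = (\<Sum>k<c. \<mu> k * ?Y k a b)" for a b
  have N_sym: "N a b = ?e * N b a" for a b
    unfolding N_def sum_distrib_left
    by (rule sum.cong) (simp_all add: mat_family_sym[OF Y, of _ a b] mult_ac)
  define x where "x = set_family skew (drop_index j ?Y) (y\<lparr>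
      pcol := (\<lambda>t. if t < n then pcol y t else if t < n + r then u (t - n)
                   else if t < n + 2 * r then v (t - n - r) else (\<lambda>i. 0)),
      pfin := (\<lambda>t. if t < m then pfin y t else if t < m + c then \<mu> (t - m) else 0)\<rparr>)"
  have outer_x: "outer_sum n r x = N"
    unfolding outer_sum_def x_def N_def using uv by (simp add: fun_eq_iff)
  have "x \<in> T_kind skew (c - 1) d (n + 2 * r) (m + c)"
    using yT mat_family_drop_index[OF Y j(1)] unfolding T_kind_iff by (simp add: x_def)
  then have x: "x \<in> rank_param_domain skew c d n m r"
    unfolding rank_param_domain_def mem_Collect_eq outer_x using N_sym by blast
  have "fill_slot j c (\<lambda>k. pfin x (m + k)) N (drop_index j ?Y) = ?Y"
  proof (rule fill_slot_drop_index)
    show "?Y k a b = 0" if "c \<le> k" for k a b using mat_family_vanish[OF Y that] .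
    show "pfin x (m + j) = 1" using j by (simp add: x_def)
    show "N a b = (\<Sum>k<c. pfin x (m + k) * ?Y k a b)" for a b
      unfolding N_def by (rule sum.cong) (simp_all add: x_def)
  qed (rule j(1))
  moreover have "family skew x = drop_index j ?Y" by (simp add: x_def)
  ultimately have "family skew (rank_param skew c j n m r x) = ?Y"
    unfolding rank_param_def family_set_family outer_x by simp
  then have "rank_param skew c j n m r x = y"
    by (rule pt_eq_by_family) (auto simp: rank_param_def x_def truncate_pt_def fun_eq_iff cols fin)
  with x j show "y \<in> (\<Union>j<c. rank_param skew c j n m r ` rank_param_domain skew c d n m r)"
    by blast
qed

lemma G_noetherian_rank_locus:
  assumes "0 < c \<Longrightarrow> G_noetherian (T_kind skew (c - 1) d (n + 2 * r) (m + c))"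
  shows "G_noetherian {y \<in> T_kind skew c d n m. tuple_rank_le c (family skew y) r}"
proof -
  let ?P = "\<lambda>j. rank_param skew c j n m r ` rank_param_domain skew c d n m r"
  have "{y \<in> T_kind skew c d n m. tuple_rank_le c (family skew y) r} = (\<Union>j<c. ?P j)"
  proof
    show "(\<Union>j<c. ?P j) \<subseteq> {y \<in> T_kind skew c d n m. tuple_rank_le c (family skew y) r}"
      using rank_param_mem_rank_locus by blast
  qed (rule rank_locus_subset_UN_rank_param)
  moreover have "G_noetherian (?P j) \<and> G_stable (?P j)" if "j < c" for j
  proof
    have "G_noetherian (rank_param_domain skew c d n m r)"
      using G_noetherian_closed_subset[OF assms rank_param_domain_closed] that by simp
    then show "G_noetherian (?P j)"
      using G_noetherian_image G_equivariant_rank_param polymap_rank_param by blast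
    show "G_stable (?P j)" by (rule G_stable_image[OF G_equivariant_rank_param])
  qed
  ultimately show ?thesis using G_noetherian_UN_lessThan[of c ?P] by simp
qed

definition combine_columns :: "nat \<Rightarrow> nat \<Rightarrow> pt \<Rightarrow> pt" where
  "combine_columns n m x = x\<lparr>
     pcol := (\<lambda>k. if k < n then (\<lambda>i. \<Sum>l<n - 1. pfin x (m + l * n + k) * pcol x l i) else (\<lambda>i. 0)),
     pfin := (\<lambda>k. if k < m then pfin x k else 0)\<rparr>"

lemma G_equivariant_combine_columns:
  "G_equivariant_on (T p q (n - 1) m') (combine_columns n m)"
  unfolding G_equivariant_on_def
proof (intro allI impI conjI)
  fix g x assume "x \<in> T p q (n - 1) m'"
  then show "act g x \<in> T p q (n - 1) m'" by (rule act_T)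
  show "combine_columns n m (act g x) = act g (combine_columns n m x)"
    unfolding combine_columns_def act_def by (simp add: gvec_sum gvec_zero fun_eq_iff)
qed

lemma polymap_combine_columns: "polymap (combine_columns n m)"
proof (rule polymapI)
  show "(\<lambda>x. pcol (combine_columns n m x) k i) \<in> polyfun" for k i
    by (cases "k < n") (simp_all add: combine_columns_def polyfun_intros)
  show "(\<lambda>x. pfin (combine_columns n m x) k) \<in> polyfun" for k
    by (cases "k < m") (simp_all add: combine_columns_def polyfun_intros)
qed (simp_all add: combine_columns_def polyfun_intros)

lemma index_pair_less:
  fixes l k n :: nat
  assumes "l < n - 1" "k < n"
  shows "l * n + k < n * n"
proof -
  have "l * n + k < (l + 1) * n" using assms by simp
  also have "\<dots> \<le> n * n" using assms by (intro mult_right_mono) auto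
  finally show ?thesis .
qed

lemma col_rank_locus_eq_image:
  assumes "0 < n"
  shows "{y \<in> T p q n m. col_rank_lt n (pcol y)} = combine_columns n m ` T p q (n - 1) (m + n * n)"
proof (intro equalityI subsetI)
  fix y assume "y \<in> combine_columns n m ` T p q (n - 1) (m + n * n)"
  then obtain x where x: "x \<in> T p q (n - 1) (m + n * n)" "y = combine_columns n m x" by blast
  have "span_dim_le (pcol y) {..<n} (n - 1)"
    unfolding span_dim_le_def
  proof (intro exI[of _ "pcol x"] ballI)
    fix k assume "k \<in> {..<n}"
    then show "\<exists>c. pcol y k = (\<lambda>i. \<Sum>l<n - 1. c l * pcol x l i)"
      by (intro exI[of _ "\<lambda>l. pfin x (m + l * n + k)"]) (simp add: x(2) combine_columns_def)
  qed
  then have "col_rank_lt n (pcol y)"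
    unfolding col_rank_lt_def using assms by (intro exI[of _ "n - 1"]) simp
  moreover have "y \<in> T p q n m" using x unfolding T_iff by (simp add: combine_columns_def)
  ultimately show "y \<in> {y \<in> T p q n m. col_rank_lt n (pcol y)}" by blast
next
  fix y assume y: "y \<in> {y \<in> T p q n m. col_rank_lt n (pcol y)}"
  then obtain r u where r: "r < n" and u: "\<forall>k\<in>{..<n}. \<exists>c. pcol y k = (\<lambda>i. \<Sum>l<r. c l * u l i)"
    unfolding col_rank_lt_def span_dim_le_def by blast
  obtain c where c: "\<And>k. k < n \<Longrightarrow> pcol y k = (\<lambda>i. \<Sum>l<r. c k l * u l i)"
    using bchoice[OF u] by auto
  have yT: "y \<in> T p q n m" using y by simp
  define x where "x = y\<lparr>pcol := (\<lambda>l. if l < r then u l else (\<lambda>i. 0)),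
     pfin := (\<lambda>t. if t < m then pfin y t else if t < m + n * n then c ((t - m) mod n) ((t - m) div n) else 0)\<rparr>"
  have xT: "x \<in> T p q (n - 1) (m + n * n)"
    using yT r unfolding T_iff by (auto simp: x_def)
  have "pcol (combine_columns n m x) k i = pcol y k i" for k i
  proof (cases "k < n")
    case True
    have "pcol (combine_columns n m x) k i = (\<Sum>l<n - 1. pfin x (m + l * n + k) * pcol x l i)"
      using True by (simp add: combine_columns_def)
    also have "\<dots> = (\<Sum>l<r. c k l * u l i)"
    proof (rule sum.mono_neutral_cong_right)
      show "{..<r} \<subseteq> {..<n - 1}" using r by auto
      show "\<forall>l\<in>{..<n - 1} - {..<r}. pfin x (m + l * n + k) * pcol x l i = 0"
        by (simp add: x_def)
      show "pfin x (m + l * n + k) * pcol x l i = c k l * u l i" if "l \<in> {..<r}" for l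
        using that r True index_pair_less[of l n k] by (simp add: x_def)
    qed simp
    finally show ?thesis using c[OF True] by simp
  next
    case False
    then show ?thesis using yT unfolding T_iff by (simp add: combine_columns_def)
  qed
  then have "combine_columns n m x = y"
    using yT unfolding T_iff by (intro pt.equality) (auto simp: combine_columns_def x_def fun_eq_iff)
  with xT show "y \<in> combine_columns n m ` T p q (n - 1) (m + n * n)" by blast
qed

lemma G_noetherian_col_rank_locus:
  assumes "0 < n \<Longrightarrow> G_noetherian (T p q (n - 1) (m + n * n))"
  shows "G_noetherian {y \<in> T p q n m. col_rank_lt n (pcol y)}"
proof (cases "n = 0")
  case True
  then show ?thesis unfolding col_rank_lt_def by (simp add: G_noetherian_empty)
next
  case False
  then show ?thesis
    using col_rank_locus_eq_image G_noetherian_image[OF _ G_equivariant_combine_columns polymap_combine_columns]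
      assms by simp
qed

theorem lemma3p2:
  fixes p q n m r :: nat
  assumes "\<And>p' q' n' m'. p' < p \<or> (p' = p \<and> q' < q) \<or> (p' = p \<and> q' = q \<and> n' < n)
             \<Longrightarrow> G_noetherian (T p' q' n' m')"
  shows "G_noetherian {x \<in> T p q n m. tuple_rank_le p (psym x) r}
       \<and> G_noetherian {x \<in> T p q n m. tuple_rank_le q (palt x) r}
       \<and> G_noetherian {x \<in> T p q n m. col_rank_lt n (pcol x)}"
proof (intro conjI)
  have "G_noetherian {x \<in> T_kind False p q n m. tuple_rank_le p (family False x) r}"
    by (rule G_noetherian_rank_locus) (simp add: T_kind_def assms)
  then show "G_noetherian {x \<in> T p q n m. tuple_rank_le p (psym x) r}"
    by (simp add: T_kind_def family_def)
  have "G_noetherian {x \<in> T_kind True q p n m. tuple_rank_le q (family True x) r}"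
    by (rule G_noetherian_rank_locus) (simp add: T_kind_def assms)
  then show "G_noetherian {x \<in> T p q n m. tuple_rank_le q (palt x) r}"
    by (simp add: T_kind_def family_def)
  show "G_noetherian {x \<in> T p q n m. col_rank_lt n (pcol x)}"
    by (rule G_noetherian_col_rank_locus) (simp add: assms)
qed

end
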